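(* Let $V_0\in\mathcal{Z}^1$ and $w\in H^1(\mathbb{R};\mathbb{C})$. Then $V_0+w\in\mathcal{Z}^1$ and $$\mathcal{P}(V_0+w)=\mathcal{P}(V_0)+\frac12\int_\mathbb{R}\langle iw,w'\rangle+\int_\mathbb{R}\langle iw,V_0'\rangle.$$
   Context: $\mathcal{X}^1=\{w\in L^\infty(\mathbb{R};\mathbb{C}):\ w'\in L^2,\ 1-|w|^2\in L^2\}$; $\mathcal{Z}^1=\{v\in\mathcal{X}^1:\ \lim_{x\to\pm\infty}v(x)\text{ exist}\}$. $\langle a,b\rangle=\mathrm{Re}(a\bar b)$. For $v\in\mathcal{Z}^1$, $\mathcal{P}(v)=\lim_{R\to\infty}\frac12\int_{-R}^R\langle iv,v'\rangle$ (the limit exists). *)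

theory Defs
  imports "HOL-Analysis.Analysis"
begin

text \<open>Functions R -> C are represented by their (locally absolutely) continuous
  representative; g is a weak derivative of v if g is locally integrable and
  v(b) - v(a) = integral of g over [a,b].\<close>

definition has_weak_deriv :: "(real \<Rightarrow> complex) \<Rightarrow> (real \<Rightarrow> complex) \<Rightarrow> bool" where
  "has_weak_deriv v g \<longleftrightarrow>
     (\<forall>a b. set_integrable lborel {a..b} g) \<and>
     (\<forall>a b. a \<le> b \<longrightarrow> v b - v a = (LBINT x:{a..b}. g x))"

definition weak_deriv :: "(real \<Rightarrow> complex) \<Rightarrow> real \<Rightarrow> complex" where
  "weak_deriv v = (SOME g. has_weak_deriv v g)"

definition L2 :: "(real \<Rightarrow> complex) set" where
  "L2 = {f. f \<in> borel_measurable lborel \<and> integrable lborel (\<lambda>x. (cmod (f x))\<^sup>2)}"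

definition Linf :: "(real \<Rightarrow> complex) set" where
  "Linf = {f. f \<in> borel_measurable lborel \<and> (\<exists>C. AE x in lborel. cmod (f x) \<le> C)}"

definition cinner :: "complex \<Rightarrow> complex \<Rightarrow> real" where
  "cinner a b = Re (a * cnj b)"

definition X1 :: "(real \<Rightarrow> complex) set" where
  "X1 = {w. w \<in> Linf \<and> (\<exists>g. has_weak_deriv w g) \<and> weak_deriv w \<in> L2
             \<and> (\<lambda>x. complex_of_real (1 - (cmod (w x))\<^sup>2)) \<in> L2}"

definition Z1 :: "(real \<Rightarrow> complex) set" where
  "Z1 = {v. v \<in> X1 \<and> (\<exists>l. (v \<longlongrightarrow> l) at_top) \<and> (\<exists>l. (v \<longlongrightarrow> l) at_bot)}"

definition H1 :: "(real \<Rightarrow> complex) set" where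
  "H1 = {w. w \<in> L2 \<and> (\<exists>g. has_weak_deriv w g) \<and> weak_deriv w \<in> L2}"

definition momentum :: "(real \<Rightarrow> complex) \<Rightarrow> real" where
  "momentum v = Lim at_top
     (\<lambda>R. 1/2 * (LBINT x:{-R..R}. cinner (\<i> * v x) (weak_deriv v x)))"

end

theory Submission
  imports Defs
begin

text \<open>
  Adding \<open>w \<in> H1\<close> keeps \<open>V0\<close> in \<open>Z1\<close>: \<open>H1\<close> functions are bounded and vanish at
  infinity, and \<open>1 - |V0 + w|\<^sup>2\<close> differs from \<open>1 - |V0|\<^sup>2\<close> by \<open>O(|w|)\<close>.
  For the momentum, expand \<open>\<langle>i(V0 + w), (V0 + w)'\<rangle>\<close> bilinearly and integrate the cross
  term \<open>\<langle>iV0, w'\<rangle>\<close> by parts into \<open>\<langle>iw, V0'\<rangle>\<close> plus a boundary term, which vanishes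
  because \<open>w\<close> does.  The delicate point is that the truncated momentum integrals of \<open>V0\<close>
  converge at all: near \<open>\<plusminus>\<infinity>\<close>, \<open>V0\<close> stays close to a unit constant \<open>l\<close>, and there
  \<open>\<langle>iV0, V0'\<rangle> = (Im (Ln (cnj l * V0)))' + (|V0|\<^sup>2 - 1) Im (V0'/V0)\<close>,
  an exact derivative plus an integrable function.

  Weak derivatives are handled through Henstock--Kurzweil primitives, for which the chain
  rule, and with it the product rule, is proved directly.
\<close>

section \<open>Primitives\<close>

definition is_primitive :: "(real \<Rightarrow> complex) \<Rightarrow> (real \<Rightarrow> complex) \<Rightarrow> bool" where
  "is_primitive v g \<longleftrightarrow> (\<forall>a b. g absolutely_integrable_on {a..b}) \<and>
     (\<forall>a b. a \<le> b \<longrightarrow> v b - v a = integral {a..b} g)"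

lemma is_primitiveI:
  assumes "\<And>a b. a \<le> b \<Longrightarrow> g absolutely_integrable_on {a..b}"
    and "\<And>a b. a \<le> b \<Longrightarrow> v b - v a = integral {a..b} g"
  shows "is_primitive v g"
  unfolding is_primitive_def
proof (intro conjI allI impI)
  fix a b :: real
  show "g absolutely_integrable_on {a..b}"
    by (cases "a \<le> b") (use assms(1) in \<open>auto simp: absolutely_integrable_negligible\<close>)
qed (use assms in auto)

lemma is_primitive_absolutely_integrable:
  "is_primitive v g \<Longrightarrow> g absolutely_integrable_on {a..b}"
  by (simp add: is_primitive_def)

lemma is_primitive_integrable: "is_primitive v g \<Longrightarrow> g integrable_on {a..b}"
  by (simp add: is_primitive_def absolutely_integrable_on_def)

lemma is_primitive_integrable_norm:
  "is_primitive v g \<Longrightarrow> (\<lambda>x. norm (g x)) integrable_on {a..b}"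
  by (simp add: is_primitive_def absolutely_integrable_on_def)

lemma is_primitive_diff_eq: "is_primitive v g \<Longrightarrow> a \<le> b \<Longrightarrow> v b - v a = integral {a..b} g"
  by (simp add: is_primitive_def)

lemma is_primitive_continuous_on:
  assumes "is_primitive v g"
  shows "continuous_on S v"
proof (intro continuous_at_imp_continuous_on ballI)
  fix x
  have "continuous_on {x-1..x+1} (\<lambda>t. v (x-1) + integral {x-1..t} g)"
    by (intro continuous_intros indefinite_integral_continuous_1 is_primitive_integrable[OF assms])
  moreover have "v (x-1) + integral {x-1..t} g = v t" if "t \<in> {x-1..x+1}" for t
    using is_primitive_diff_eq[OF assms, of "x-1" t] that by (simp add: diff_eq_eq add.commute)
  ultimately have "continuous_on {x-1..x+1} v"
    by (rule continuous_on_eq) blast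
  then show "isCont v x"
    by (rule continuous_on_interior) simp
qed

lemma borel_measurable_primitive:
  "is_primitive v g \<Longrightarrow> v \<in> borel_measurable lborel"
  using borel_measurable_continuous_onI[OF is_primitive_continuous_on] by simp

lemma norm_primitive_diff_le:
  assumes "is_primitive v g" "x \<le> y"
  shows "norm (v y - v x) \<le> integral {x..y} (\<lambda>t. norm (g t))"
  using integral_norm_bound_integral[OF is_primitive_integrable[OF assms(1)]
      is_primitive_integrable_norm[OF assms(1)]] is_primitive_diff_eq[OF assms]
  by simp

lemma eq_if_locally_small_increments:
  fixes E :: "real \<Rightarrow> 'a::real_normed_vector" and G :: "real \<Rightarrow> real"
  assumes ab: "a \<le> b"
    and small: "\<And>e. e > 0 \<Longrightarrow> \<exists>d>0. \<forall>x y. a \<le> x \<longrightarrow> x \<le> y \<longrightarrow> y \<le> b \<longrightarrow> y - x < d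
              \<longrightarrow> norm (E y - E x) \<le> e * (G y - G x)"
  shows "E b = E a"
proof -
  have bound: "norm (E b - E a) \<le> e * (G b - G a)" if e: "e > 0" for e
  proof -
    obtain d where d: "d > 0" and dE: "\<forall>x y. a \<le> x \<longrightarrow> x \<le> y \<longrightarrow> y \<le> b \<longrightarrow> y - x < d
              \<longrightarrow> norm (E y - E x) \<le> e * (G y - G x)"
      using small[OF e] by blast
    obtain n :: nat where n: "(b - a) / d < n"
      using reals_Archimedean2 by blast
    have "0 \<le> (b - a) / d" using ab d by simp
    then have n0: "n > 0" using n by linarith
    define x where "x k = a + real k * (b - a) / n" for k
    have x0: "x 0 = a" and xn: "x n = b" using n0 by (auto simp: x_def)
    have step: "x (Suc k) - x k = (b - a) / n" for k
      using n0 by (simp add: x_def field_simps)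
    have step_small: "(b - a) / n < d"
      using n d n0 by (simp add: field_simps)
    have step_nonneg: "0 \<le> (b - a) / n" using ab by simp
    have x_le_b: "x (Suc k) \<le> b" if "k < n" for k
    proof -
      have "real (Suc k) * (b - a) / n \<le> real n * (b - a) / n"
        using that ab n0 by (intro divide_right_mono mult_right_mono) auto
      then show ?thesis using n0 by (simp add: x_def)
    qed
    have "norm (E b - E a) = norm (\<Sum>k<n. E (x (Suc k)) - E (x k))"
      using sum_lessThan_telescope[of "\<lambda>k. E (x k)" n] x0 xn by simp
    also have "\<dots> \<le> (\<Sum>k<n. norm (E (x (Suc k)) - E (x k)))"
      by (rule norm_sum)
    also have "\<dots> \<le> (\<Sum>k<n. e * (G (x (Suc k)) - G (x k)))"
    proof (rule sum_mono)
      fix k assume "k \<in> {..<n}"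
      moreover have "a \<le> x k" using ab n0 by (simp add: x_def)
      ultimately show "norm (E (x (Suc k)) - E (x k)) \<le> e * (G (x (Suc k)) - G (x k))"
        using dE x_le_b step[of k] step_small step_nonneg by auto
    qed
    also have "\<dots> = e * (G b - G a)"
      using sum_lessThan_telescope[of "\<lambda>k. G (x k)" n] x0 xn
      by (simp add: sum_distrib_left[symmetric])
    finally show ?thesis .
  qed
  have "norm (E b - E a) \<le> G b - G a"
    using bound[of 1] by simp
  then have G_mono: "G b - G a \<ge> 0"
    by (rule order_trans[OF norm_ge_zero])
  show ?thesis
  proof (rule ccontr)
    assume "E b \<noteq> E a"
    then have pos: "norm (E b - E a) > 0" by simp
    define e where "e = norm (E b - E a) / (G b - G a + 1)"
    have "e > 0" using pos G_mono by (simp add: e_def)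
    then have "norm (E b - E a) \<le> e * (G b - G a)" by (rule bound)
    also have "\<dots> < norm (E b - E a)"
      using pos G_mono by (simp add: e_def field_simps)
    finally show False by simp
  qed
qed

lemma eq_if_quadratic_increments:
  fixes E :: "real \<Rightarrow> 'a::real_normed_vector" and G :: "real \<Rightarrow> real"
  assumes ab: "a \<le> b" and G: "continuous_on {a..b} G"
    and G_mono: "\<And>x y. a \<le> x \<Longrightarrow> x \<le> y \<Longrightarrow> y \<le> b \<Longrightarrow> G x \<le> G y"
    and increment: "\<And>x y. a \<le> x \<Longrightarrow> x \<le> y \<Longrightarrow> y \<le> b \<Longrightarrow> norm (E y - E x) \<le> K * (G y - G x)\<^sup>2"
  shows "E b = E a"
proof (rule eq_if_locally_small_increments[OF ab])
  fix e :: real assume e: "e > 0"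
  define e' where "e' = e / (\<bar>K\<bar> + 1)"
  have "e' > 0" using e by (simp add: e'_def)
  moreover have "uniformly_continuous_on {a..b} G"
    by (rule compact_uniformly_continuous[OF G compact_Icc])
  ultimately obtain d where d: "d > 0"
    and dG: "\<forall>x\<in>{a..b}. \<forall>x'\<in>{a..b}. dist x' x < d \<longrightarrow> dist (G x') (G x) < e'"
    unfolding uniformly_continuous_on_def by blast
  have "norm (E y - E x) \<le> e * (G y - G x)"
    if xy: "a \<le> x" "x \<le> y" "y \<le> b" "y - x < d" for x y
  proof -
    have "dist (G y) (G x) < e'"
      using xy by (intro dG[rule_format]) (auto simp: dist_real_def)
    then have "G y - G x \<le> e'" by (simp add: dist_real_def)
    then have "\<bar>K\<bar> * (G y - G x) \<le> \<bar>K\<bar> * e'"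
      by (rule mult_left_mono) simp
    also have "\<bar>K\<bar> * e' \<le> e"
      using e by (simp add: e'_def field_simps)
    finally have "\<bar>K\<bar> * (G y - G x) \<le> e" .
    then have "\<bar>K\<bar> * (G y - G x) * (G y - G x) \<le> e * (G y - G x)"
      using G_mono[OF xy(1-3)] by (intro mult_right_mono) auto
    moreover have "K * (G y - G x)\<^sup>2 \<le> \<bar>K\<bar> * (G y - G x) * (G y - G x)"
      by (simp add: power2_eq_square mult.assoc mult_right_mono)
    ultimately show ?thesis
      using increment[OF xy(1-3)] by linarith
  qed
  with d show "\<exists>d>0. \<forall>x y. a \<le> x \<longrightarrow> x \<le> y \<longrightarrow> y \<le> b \<longrightarrow> y - x < d
      \<longrightarrow> norm (E y - E x) \<le> e * (G y - G x)" by blast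
qed

lemma absolutely_integrable_continuous_mult:
  fixes h g :: "real \<Rightarrow> complex"
  assumes h: "continuous_on {a..b} h" and g: "g absolutely_integrable_on {a..b}"
  shows "(\<lambda>t. h t * g t) absolutely_integrable_on {a..b}"
proof (rule absolutely_integrable_bounded_measurable_product[where h="(*)"])
  show "h \<in> borel_measurable (lebesgue_on {a..b})"
    using h by (rule continuous_imp_measurable_on_sets_lebesgue) simp
  show "bounded (h ` {a..b})"
    using compact_continuous_image[OF h] compact_imp_bounded by blast
qed (use g bilinear_times in auto)

lemma primitive_comp_increment_bound:
  fixes F Phi :: "complex \<Rightarrow> complex"
  assumes prim: "is_primitive v g" and xy: "x \<le> y" and vS: "\<And>t. t \<in> {x..y} \<Longrightarrow> v t \<in> S"
    and remainder: "\<And>z w. z \<in> S \<Longrightarrow> w \<in> S \<Longrightarrow>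
      norm (F z - F w - Phi w * (z - w)) \<le> C * (norm (z - w))\<^sup>2"
    and lip: "L-lipschitz_on S Phi" and C: "C \<ge> 0"
    and int: "(\<lambda>t. Phi (v t) * g t) integrable_on {x..y}"
  shows "norm (F (v y) - F (v x) - integral {x..y} (\<lambda>t. Phi (v t) * g t))
    \<le> (C + L) * (integral {x..y} (\<lambda>t. norm (g t)))\<^sup>2"
proof -
  define D where "D = integral {x..y} (\<lambda>t. norm (g t))"
  have L: "L \<ge> 0" using lip by (rule lipschitz_on_nonneg)
  have osc: "norm (v t - v x) \<le> D" if t: "t \<in> {x..y}" for t
  proof -
    have "norm (v t - v x) \<le> integral {x..t} (\<lambda>t. norm (g t))"
      using norm_primitive_diff_le[OF prim] t by simp
    also have "\<dots> \<le> D"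
      unfolding D_def using t is_primitive_integrable_norm[OF prim]
      by (intro integral_subset_le) auto
    finally show ?thesis .
  qed
  have linear_part: "norm (F (v y) - F (v x) - Phi (v x) * (v y - v x)) \<le> C * D\<^sup>2"
  proof -
    have "norm (F (v y) - F (v x) - Phi (v x) * (v y - v x)) \<le> C * (norm (v y - v x))\<^sup>2"
      using xy by (intro remainder vS) auto
    also have "\<dots> \<le> C * D\<^sup>2"
      using osc[of y] xy C by (intro mult_left_mono power_mono) auto
    finally show ?thesis .
  qed
  have ig: "g integrable_on {x..y}" by (rule is_primitive_integrable[OF prim])
  have "Phi (v x) * (v y - v x) - integral {x..y} (\<lambda>t. Phi (v t) * g t)
      = integral {x..y} (\<lambda>t. (Phi (v x) - Phi (v t)) * g t)"
    using is_primitive_diff_eq[OF prim xy] integral_diff[OF integrable_on_mult_right[OF ig] int]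
    by (simp add: left_diff_distrib)
  also have "norm \<dots> \<le> integral {x..y} (\<lambda>t. (L * D) * norm (g t))"
  proof (rule integral_norm_bound_integral)
    show "(\<lambda>t. (Phi (v x) - Phi (v t)) * g t) integrable_on {x..y}"
      using integrable_diff[OF integrable_on_mult_right[OF ig] int] by (simp add: left_diff_distrib)
    show "(\<lambda>t. L * D * norm (g t)) integrable_on {x..y}"
      by (intro integrable_on_mult_right is_primitive_integrable_norm[OF prim])
    fix t assume t: "t \<in> {x..y}"
    have "norm (Phi (v x) - Phi (v t)) \<le> L * norm (v x - v t)"
      using xy t by (intro lipschitz_on_normD[OF lip] vS) auto
    also have "\<dots> \<le> L * D"
      using osc[OF t] L by (simp add: mult_left_mono norm_minus_commute)
    finally show "norm ((Phi (v x) - Phi (v t)) * g t) \<le> L * D * norm (g t)"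
      by (simp add: norm_mult mult_right_mono)
  qed
  also have "\<dots> = L * D\<^sup>2" by (simp add: D_def power2_eq_square)
  finally have "norm (Phi (v x) * (v y - v x) - integral {x..y} (\<lambda>t. Phi (v t) * g t)) \<le> L * D\<^sup>2" .
  then have "norm (F (v y) - F (v x) - integral {x..y} (\<lambda>t. Phi (v t) * g t)) \<le> C * D\<^sup>2 + L * D\<^sup>2"
    by (rule norm_diff_triangle_le[OF linear_part])
  then show ?thesis by (simp add: D_def distrib_right)
qed

text \<open>Chain rule: \<open>F \<circ> v\<close> minus the candidate primitive has increments of order
  \<open>(\<integral>|g|)\<^sup>2\<close> on small intervals, hence is constant.\<close>

lemma primitive_comp_integral:
  fixes F Phi :: "complex \<Rightarrow> complex"
  assumes prim: "is_primitive v g" and ab: "a \<le> b" and vS: "\<And>t. t \<in> {a..b} \<Longrightarrow> v t \<in> S"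
    and remainder: "\<And>z w. z \<in> S \<Longrightarrow> w \<in> S \<Longrightarrow>
      norm (F z - F w - Phi w * (z - w)) \<le> C * (norm (z - w))\<^sup>2"
    and lip: "L-lipschitz_on S Phi" and C: "C \<ge> 0"
  shows "(\<lambda>t. Phi (v t) * g t) absolutely_integrable_on {a..b}"
    and "F (v b) - F (v a) = integral {a..b} (\<lambda>t. Phi (v t) * g t)"
proof -
  define P where "P = (\<lambda>t. Phi (v t) * g t)"
  have "continuous_on {a..b} (\<lambda>t. Phi (v t))"
    using vS by (intro continuous_on_compose2[OF lipschitz_on_continuous_on[OF lip]]
        is_primitive_continuous_on[OF prim]) auto
  then show P_abs: "(\<lambda>t. Phi (v t) * g t) absolutely_integrable_on {a..b}"
    by (rule absolutely_integrable_continuous_mult[OF _ is_primitive_absolutely_integrable[OF prim]])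
  have P_int: "P integrable_on {x..y}" if "a \<le> x" "y \<le> b" for x y
  proof (rule integrable_subinterval_real)
    show "P integrable_on {a..b}"
      using P_abs unfolding P_def absolutely_integrable_on_def by blast
  qed (use that in auto)
  have ng_int: "(\<lambda>t. norm (g t)) integrable_on {x..y}" for x y
    by (rule is_primitive_integrable_norm[OF prim])
  define G where "G t = integral {a..t} (\<lambda>t. norm (g t))" for t
  define E where "E t = F (v t) - integral {a..t} P" for t
  have "E b = E a"
  proof (rule eq_if_quadratic_increments[OF ab])
    show "continuous_on {a..b} G"
      unfolding G_def by (intro indefinite_integral_continuous_1 ng_int)
    fix x y assume xy: "a \<le> x" "x \<le> y" "y \<le> b"
    have G_diff: "G y - G x = integral {x..y} (\<lambda>t. norm (g t))"
      using Henstock_Kurzweil_Integration.integral_combine[OF xy(1,2) ng_int] by (simp add: G_def)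
    then show "G x \<le> G y"
      using integral_nonneg[OF ng_int, of x y] by simp
    have vS_xy: "v t \<in> S" if "t \<in> {x..y}" for t
      using vS that xy by auto
    have "E y - E x = F (v y) - F (v x) - integral {x..y} P"
      using Henstock_Kurzweil_Integration.integral_combine[OF xy(1,2) P_int] xy
      by (simp add: E_def algebra_simps)
    also have "norm \<dots> \<le> (C + L) * (integral {x..y} (\<lambda>t. norm (g t)))\<^sup>2"
      using primitive_comp_increment_bound[OF prim xy(2) vS_xy remainder lip C] P_int[OF xy(1,3)]
      by (simp add: P_def)
    finally show "norm (E y - E x) \<le> (C + L) * (G y - G x)\<^sup>2"
      by (simp add: G_diff)
  qed
  then show "F (v b) - F (v a) = integral {a..b} (\<lambda>t. Phi (v t) * g t)"
    by (simp add: E_def P_def algebra_simps)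
qed

lemma is_primitive_comp:
  fixes F Phi :: "complex \<Rightarrow> complex"
  assumes "is_primitive v g"
    and "\<And>z w. norm (F z - F w - Phi w * (z - w)) \<le> C * (norm (z - w))\<^sup>2"
    and "L-lipschitz_on UNIV Phi" and "C \<ge> 0"
  shows "is_primitive (\<lambda>t. F (v t)) (\<lambda>t. Phi (v t) * g t)"
  using primitive_comp_integral[OF assms(1) _ _ assms(2-4)] by (intro is_primitiveI) auto

lemma is_primitive_add:
  assumes "is_primitive u g" "is_primitive w h"
  shows "is_primitive (\<lambda>x. u x + w x) (\<lambda>x. g x + h x)"
proof (rule is_primitiveI)
  fix a b :: real assume ab: "a \<le> b"
  show "(\<lambda>x. g x + h x) absolutely_integrable_on {a..b}"
    using assms by (intro set_integral_add is_primitive_absolutely_integrable)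
  show "u b + w b - (u a + w a) = integral {a..b} (\<lambda>x. g x + h x)"
    using is_primitive_diff_eq[OF assms(1) ab] is_primitive_diff_eq[OF assms(2) ab]
      integral_add[OF is_primitive_integrable[OF assms(1)] is_primitive_integrable[OF assms(2)]]
    by (simp add: algebra_simps)
qed

lemma is_primitive_cmult:
  assumes "is_primitive u g"
  shows "is_primitive (\<lambda>x. c * u x) (\<lambda>x. c * g x)"
proof (rule is_primitiveI)
  fix a b :: real assume ab: "a \<le> b"
  show "(\<lambda>x. c * g x) absolutely_integrable_on {a..b}"
    using is_primitive_absolutely_integrable[OF assms] by (intro set_integrable_mult_right) auto
  show "c * u b - c * u a = integral {a..b} (\<lambda>x. c * g x)"
    using is_primitive_diff_eq[OF assms ab] by (simp add: algebra_simps)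
qed

lemma is_primitive_diff:
  assumes "is_primitive u g" "is_primitive w h"
  shows "is_primitive (\<lambda>x. u x - w x) (\<lambda>x. g x - h x)"
  using is_primitive_add[OF assms(1) is_primitive_cmult[OF assms(2), of "-1"]] by simp

lemma is_primitive_cnj:
  assumes "is_primitive u g"
  shows "is_primitive (\<lambda>x. cnj (u x)) (\<lambda>x. cnj (g x))"
proof (rule is_primitiveI)
  fix a b :: real assume ab: "a \<le> b"
  show "(\<lambda>x. cnj (g x)) absolutely_integrable_on {a..b}"
    using absolutely_integrable_linear[OF is_primitive_absolutely_integrable[OF assms] bounded_linear_cnj]
    by (simp add: o_def)
  show "cnj (u b) - cnj (u a) = integral {a..b} (\<lambda>x. cnj (g x))"
    using is_primitive_diff_eq[OF assms ab, THEN arg_cong[where f=cnj]]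
      integral_linear[OF is_primitive_integrable[OF assms] bounded_linear_cnj]
    by (simp add: o_def)
qed

lemma is_primitive_power2:
  assumes "is_primitive v g"
  shows "is_primitive (\<lambda>x. (v x)\<^sup>2) (\<lambda>x. 2 * v x * g x)"
proof -
  have remainder: "norm (z\<^sup>2 - w\<^sup>2 - 2 * w * (z - w)) \<le> 1 * (norm (z - w))\<^sup>2" for z w :: complex
  proof -
    have "z\<^sup>2 - w\<^sup>2 - 2 * w * (z - w) = (z - w)\<^sup>2" by (simp add: power2_eq_square algebra_simps)
    then show ?thesis by (simp add: norm_power)
  qed
  have lip: "2-lipschitz_on UNIV (\<lambda>z::complex. 2 * z)"
  proof (rule lipschitz_onI)
    fix z w :: complex
    have "2 * z - 2 * w = 2 * (z - w)" by (simp add: algebra_simps)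
    then show "dist (2 * z) (2 * w) \<le> 2 * dist z w" by (simp only: dist_norm norm_mult) simp
  qed simp
  show ?thesis
    using is_primitive_comp[OF assms remainder lip zero_le_one] by (simp add: mult.assoc)
qed

text \<open>Polarisation reduces the product rule to the chain rule for squares.\<close>

lemma is_primitive_mult:
  assumes u: "is_primitive u g" and w: "is_primitive w h"
  shows "is_primitive (\<lambda>x. u x * w x) (\<lambda>x. u x * h x + g x * w x)"
proof -
  have "is_primitive (\<lambda>x. (1/4) * ((u x + w x)\<^sup>2 - (u x - w x)\<^sup>2))
      (\<lambda>x. (1/4) * (2 * (u x + w x) * (g x + h x) - 2 * (u x - w x) * (g x - h x)))"
    by (intro is_primitive_cmult is_primitive_diff is_primitive_power2 is_primitive_add u w)
  moreover have "(\<lambda>x. (1/4) * ((u x + w x)\<^sup>2 - (u x - w x)\<^sup>2)) = (\<lambda>x. u x * w x)"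
    and "(\<lambda>x. (1/4) * (2 * (u x + w x) * (g x + h x) - 2 * (u x - w x) * (g x - h x)))
      = (\<lambda>x. u x * h x + g x * w x)"
    by (simp_all add: power2_eq_square algebra_simps)
  ultimately show ?thesis by simp
qed

lemma is_primitive_reflect:
  assumes "is_primitive v g"
  shows "is_primitive (\<lambda>x. v (- x)) (\<lambda>x. - g (- x))"
proof (rule is_primitiveI)
  fix a b :: real assume ab: "a \<le> b"
  have "(\<lambda>x. g (- x)) absolutely_integrable_on {- (-a) .. - (-b)}"
    unfolding absolutely_integrable_reflect_real by (rule is_primitive_absolutely_integrable[OF assms])
  then have "(\<lambda>x. (-1) * g (- x)) absolutely_integrable_on {a..b}"
    by (intro set_integrable_mult_right) simp
  then show "(\<lambda>x. - g (- x)) absolutely_integrable_on {a..b}"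
    by simp
  have "v (- a) - v (- b) = integral {a..b} (\<lambda>x. g (- x))"
    using is_primitive_diff_eq[OF assms, of "-b" "-a"] ab
      Henstock_Kurzweil_Integration.integral_reflect_real[of "-a" "-b" g] by simp
  then have "v (- b) - v (- a) = - integral {a..b} (\<lambda>x. g (- x))"
    by (simp add: algebra_simps)
  then show "v (- b) - v (- a) = integral {a..b} (\<lambda>x. - g (- x))"
    by (simp add: integral_neg)
qed

lemma set_integrable_if_integrable:
  fixes f :: "'a \<Rightarrow> 'b::{banach, second_countable_topology}"
  shows "integrable M f \<Longrightarrow> A \<in> sets M \<Longrightarrow> set_integrable M A f"
  unfolding set_integrable_def by (rule integrable_mult_indicator)

lemma integral_Icc_eq_set_integral:
  fixes q :: "real \<Rightarrow> 'a::euclidean_space"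
  assumes "integrable lborel q"
  shows "integral {a..b} q = (LBINT x:{a..b}. q x)"
  by (intro set_borel_integral_eq_integral(2)[symmetric] set_integrable_if_integrable assms) simp

lemma abs_integral_Icc_le:
  fixes q :: "real \<Rightarrow> real"
  assumes q: "integrable lborel q"
  shows "\<bar>integral {a..b} q\<bar> \<le> (LINT x|lborel. \<bar>q x\<bar>)"
proof -
  have "\<bar>integral {a..b} q\<bar> \<le> (LBINT x:{a..b}. \<bar>q x\<bar>)"
    using set_integral_norm_bound[OF set_integrable_if_integrable[OF q]]
    by (simp add: integral_Icc_eq_set_integral[OF q])
  also have "\<dots> \<le> (LINT x|lborel. \<bar>q x\<bar>)"
    unfolding set_lebesgue_integral_def using q
    by (intro integral_mono integrable_mult_indicator) (auto split: split_indicator)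
  finally show ?thesis .
qed

lemma tendsto_integral_Icc_at_top:
  fixes q :: "real \<Rightarrow> 'a::euclidean_space"
  assumes q: "integrable lborel q"
  shows "((\<lambda>b. integral {a..b} q) \<longlongrightarrow> (LBINT x:{a..}. q x)) at_top"
  unfolding integral_Icc_eq_set_integral[OF q]
  by (intro tendsto_set_lebesgue_integral_at_top set_integrable_if_integrable q) auto

lemma tendsto_integral_symmetric_interval:
  fixes q :: "real \<Rightarrow> 'a::euclidean_space"
  assumes q: "integrable lborel q"
  shows "((\<lambda>R. integral {-R..R} q) \<longlongrightarrow> (LINT x|lborel. q x)) at_top"
  unfolding integral_Icc_eq_set_integral[OF q]
proof (rule tendsto_at_topI_sequentially)
  fix X :: "nat \<Rightarrow> real" assume X: "filterlim X at_top sequentially"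
  show "(\<lambda>n. LBINT x:{- X n..X n}. q x) \<longlonglongrightarrow> (LINT x|lborel. q x)"
    unfolding set_lebesgue_integral_def
  proof (rule integral_dominated_convergence[where w="\<lambda>x. norm (q x)"])
    show "AE x in lborel. (\<lambda>n. indicator {- X n..X n} x *\<^sub>R q x) \<longlonglongrightarrow> q x"
    proof (rule AE_I2)
      fix x :: real
      have "eventually (\<lambda>n. \<bar>x\<bar> \<le> X n) sequentially"
        using X unfolding filterlim_at_top by auto
      then have "eventually (\<lambda>n. indicator {- X n..X n} x *\<^sub>R q x = q x) sequentially"
        by eventually_elim (auto simp: indicator_def)
      then show "(\<lambda>n. indicator {- X n..X n} x *\<^sub>R q x) \<longlonglongrightarrow> q x"
        by (rule tendsto_eventually)
    qed
  qed (use q in \<open>auto split: split_indicator\<close>)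
qed

lemma set_integrable_lborel_if_absolutely_integrable:
  fixes f :: "real \<Rightarrow> 'b::euclidean_space"
  assumes "f \<in> borel_measurable lborel" and "f absolutely_integrable_on {a..b}"
  shows "set_integrable lborel {a..b} f"
proof -
  have "(\<lambda>x. indicator {a..b} x *\<^sub>R f x) \<in> borel_measurable lborel"
    using assms(1) by measurable
  moreover have "integrable lebesgue (\<lambda>x. indicator {a..b} x *\<^sub>R f x)"
    using assms(2) by (simp add: set_integrable_def)
  ultimately show ?thesis
    unfolding set_integrable_def by (simp add: integrable_completion)
qed

section \<open>Weak derivatives\<close>

lemma AE_zero_if_interval_integrals_zero:
  fixes f :: "real \<Rightarrow> 'a::{banach, second_countable_topology}"
  assumes int: "\<And>a b. set_integrable lborel {a..b} f"
    and zero: "\<And>a b. a \<le> b \<Longrightarrow> (LBINT x:{a..b}. f x) = 0"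
  shows "AE x in lborel. f x = 0"
proof -
  have zero': "(LBINT x:{a..b}. f x) = 0" for a b
    using zero[of a b] by (cases "a \<le> b") (simp_all add: set_lebesgue_integral_def)
  have "AE x in lborel. f x = 0 \<or> x \<notin> {- real n..real n}" for n :: nat
  proof -
    define fn where "fn x = indicator {- real n..real n} x *\<^sub>R f x" for x
    have fn_int: "integrable lborel fn"
      using int unfolding set_integrable_def fn_def .
    have fn_interval: "(LBINT x:{a..b}. fn x) = (LBINT x:{max a (- real n)..min b (real n)}. f x)" for a b
      unfolding set_lebesgue_integral_def fn_def
      by (intro Bochner_Integration.integral_cong) (auto split: split_indicator)
    have fn_UNIV: "(LINT x|lborel. fn x) = 0"
      using zero'[of "- real n" "real n"] by (simp add: fn_def set_lebesgue_integral_def)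
    have "(LBINT x:A. fn x) = 0" if "A \<in> sets borel" for A
      using that
    proof (induction rule: borel_set_induct)
      case (interval a b)
      then show ?case by (simp add: fn_interval zero')
    next
      case (compl A)
      have "(LINT x|lborel. fn x) = (LBINT x:(A \<union> - A). fn x)"
        by (simp add: set_lebesgue_integral_def)
      also have "\<dots> = (LBINT x:A. fn x) + (LBINT x:-A. fn x)"
        using compl.hyps fn_int by (intro set_integral_Un set_integrable_if_integrable) auto
      finally show ?case using fn_UNIV compl.IH by simp
    next
      case (union A)
      have "(LBINT x:(\<Union>i. A i). fn x) = (\<Sum>i. (LBINT x:A i. fn x))"
        using union.hyps fn_int
        by (intro lebesgue_integral_countable_add set_integrable_if_integrable)
          (auto simp: disjoint_family_on_def)
      then show ?case using union.IH by simp
    qed (simp add: set_lebesgue_integral_def)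
    then have "AE x in lborel. fn x = 0"
      by (intro sigma_finite_measure.density_zero[OF sigma_finite_lborel fn_int]) simp
    then show ?thesis by eventually_elim (auto simp: fn_def)
  qed
  then have "AE x in lborel. \<forall>n::nat. f x = 0 \<or> x \<notin> {- real n..real n}"
    by (simp add: AE_all_countable)
  then show ?thesis
  proof eventually_elim
    case (elim x)
    obtain n :: nat where "\<bar>x\<bar> \<le> n" using real_arch_simple by blast
    then have "x \<in> {- real n..real n}" by auto
    with elim show ?case by blast
  qed
qed

lemma has_weak_deriv_imp_is_primitive:
  assumes "has_weak_deriv v g"
  shows "is_primitive v g"
proof (rule is_primitiveI)
  fix a b :: real assume "a \<le> b"
  have int: "set_integrable lborel {a..b} g"
    using assms by (simp add: has_weak_deriv_def)
  then show "g absolutely_integrable_on {a..b}"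
    using set_borel_integral_eq_integral(1)[OF set_integrable_norm[OF int]]
    by (simp add: absolutely_integrable_on_def set_borel_integral_eq_integral(1))
  show "v b - v a = integral {a..b} g"
    using assms \<open>a \<le> b\<close> set_borel_integral_eq_integral(2)[OF int]
    by (simp add: has_weak_deriv_def)
qed

lemma has_weak_deriv_weak_deriv:
  assumes "has_weak_deriv v g"
  shows "has_weak_deriv v (weak_deriv v)"
  unfolding weak_deriv_def by (rule someI[of "has_weak_deriv v", OF assms])

lemma has_weak_deriv_measurable:
  assumes "has_weak_deriv v g"
  shows "g \<in> borel_measurable lborel"
proof (rule borel_measurable_LIMSEQ_metric)
  fix i :: nat
  show "(\<lambda>x. indicator {- real i..real i} x *\<^sub>R g x) \<in> borel_measurable lborel"
    using assms unfolding has_weak_deriv_def set_integrable_def by (blast intro: borel_measurable_integrable)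
next
  fix x :: real
  obtain N :: nat where N: "\<bar>x\<bar> \<le> N" using real_arch_simple by blast
  have "eventually (\<lambda>i. indicator {- real i..real i} x *\<^sub>R g x = g x) sequentially"
    using N by (intro eventually_sequentiallyI[of N]) (auto split: split_indicator)
  then show "(\<lambda>i. indicator {- real i..real i} x *\<^sub>R g x) \<longlonglongrightarrow> g x"
    by (rule tendsto_eventually)
qed

lemma has_weak_deriv_unique:
  assumes "has_weak_deriv v g1" "has_weak_deriv v g2"
  shows "AE x in lborel. g1 x = g2 x"
proof -
  have "AE x in lborel. g1 x - g2 x = 0"
  proof (rule AE_zero_if_interval_integrals_zero)
    fix a b :: real
    show "set_integrable lborel {a..b} (\<lambda>x. g1 x - g2 x)"
      using assms unfolding has_weak_deriv_def by (intro set_integral_diff) auto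
    assume "a \<le> b"
    then show "(LBINT x:{a..b}. g1 x - g2 x) = 0"
      using assms unfolding has_weak_deriv_def by (subst set_integral_diff) auto
  qed
  then show ?thesis by simp
qed

lemma has_weak_deriv_add:
  assumes "has_weak_deriv u g" "has_weak_deriv v h"
  shows "has_weak_deriv (\<lambda>x. u x + v x) (\<lambda>x. g x + h x)"
  using assms unfolding has_weak_deriv_def
  by (auto simp: set_integral_add algebra_simps)


lemma borel_measurable_cinner [measurable]:
  assumes [measurable]: "f \<in> borel_measurable M" "g \<in> borel_measurable M"
  shows "(\<lambda>x. cinner (f x) (g x)) \<in> borel_measurable M"
  unfolding cinner_def by simp

lemma integrable_if_bounded_by_L2_product:
  fixes f g :: "real \<Rightarrow> complex" and q :: "real \<Rightarrow> real"
  assumes "f \<in> L2" "g \<in> L2" and q: "q \<in> borel_measurable lborel"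
    and bound: "\<And>x. \<bar>q x\<bar> \<le> C * (norm (f x) * norm (g x))"
  shows "integrable lborel q"
proof (rule Bochner_Integration.integrable_bound)
  show "integrable lborel (\<lambda>x. \<bar>C\<bar> * ((norm (f x))\<^sup>2 + (norm (g x))\<^sup>2))"
    using assms(1,2) by (auto simp: L2_def)
  show "AE x in lborel. norm (q x) \<le> norm (\<bar>C\<bar> * ((norm (f x))\<^sup>2 + (norm (g x))\<^sup>2))"
  proof (rule AE_I2)
    fix x
    have p: "0 \<le> norm (f x) * norm (g x)" by simp
    have "norm (f x) * norm (g x) \<le> (norm (f x))\<^sup>2 + (norm (g x))\<^sup>2"
      using sum_squares_bound[of "norm (f x)" "norm (g x)"] p by linarith
    then have "\<bar>C\<bar> * (norm (f x) * norm (g x)) \<le> \<bar>C\<bar> * ((norm (f x))\<^sup>2 + (norm (g x))\<^sup>2)"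
      by (rule mult_left_mono) simp
    moreover have "C * (norm (f x) * norm (g x)) \<le> \<bar>C\<bar> * (norm (f x) * norm (g x))"
      by (rule mult_right_mono[OF abs_ge_self p])
    ultimately have "C * (norm (f x) * norm (g x)) \<le> \<bar>C\<bar> * ((norm (f x))\<^sup>2 + (norm (g x))\<^sup>2)"
      by linarith
    then show "norm (q x) \<le> norm (\<bar>C\<bar> * ((norm (f x))\<^sup>2 + (norm (g x))\<^sup>2))"
      using bound[of x] by simp
  qed
qed (rule q)

lemma integrable_cinner_L2:
  assumes "u \<in> L2" "v \<in> L2"
  shows "integrable lborel (\<lambda>x. cinner (c * u x) (v x))"
proof (rule integrable_if_bounded_by_L2_product[OF assms, of _ "norm c"])
  have [measurable]: "u \<in> borel_measurable lborel" "v \<in> borel_measurable lborel"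
    using assms by (auto simp: L2_def)
  show "(\<lambda>x. cinner (c * u x) (v x)) \<in> borel_measurable lborel"
    by measurable
  show "\<bar>cinner (c * u x) (v x)\<bar> \<le> norm c * (norm (u x) * norm (v x))" for x
    using abs_Re_le_cmod[of "c * u x * cnj (v x)"] by (simp add: cinner_def norm_mult)
qed

lemma L2_reflect: "f \<in> L2 \<Longrightarrow> (\<lambda>x. f (- x)) \<in> L2"
  using lborel_integrable_real_affine_iff[of "-1" "\<lambda>x. (norm (f x))\<^sup>2" 0]
  by (auto simp: L2_def measurable_compose[OF borel_measurable_uminus])

lemma limit_zero_if_integrable_nonneg:
  fixes h :: "real \<Rightarrow> real"
  assumes int: "integrable lborel h" and nonneg: "\<And>x. h x \<ge> 0" and lim: "(h \<longlongrightarrow> c) at_top"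
  shows "c = 0"
proof (rule ccontr)
  have "c \<ge> 0" by (rule tendsto_lowerbound[OF lim]) (use nonneg in auto)
  moreover assume "c \<noteq> 0"
  ultimately have c: "c > 0" by simp
  then have "eventually (\<lambda>x. h x > c / 2) at_top"
    using order_tendstoD(1)[OF lim, of "c/2"] by simp
  then obtain N where N: "\<And>x. x \<ge> N \<Longrightarrow> h x > c / 2"
    by (auto simp: eventually_at_top_linorder)
  define M where "M = 2 * (LINT x|lborel. h x) / c + 1"
  have "(LINT x|lborel. h x) \<ge> 0" using nonneg by simp
  then have "2 * (LINT x|lborel. h x) / c \<ge> 0" using c by simp
  then have M: "M > 0" by (simp add: M_def)
  have "(c/2) * M = (LINT x|lborel. (c/2) * indicator {N..N+M} x)"
    using M by simp
  also have "\<dots> \<le> (LINT x|lborel. h x)"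
  proof (rule integral_mono[OF _ int])
    show "integrable lborel (\<lambda>x. (c/2) * indicator {N..N+M} x)"
      using M by (intro integrable_mult_right integrable_real_indicator) (auto simp: emeasure_lborel_Icc)
    show "(c/2) * indicator {N..N+M} x \<le> h x" for x
      using N[of x] nonneg[of x] c by (auto simp: indicator_def)
  qed
  finally have "(c/2) * M \<le> (LINT x|lborel. h x)" .
  moreover have "(c/2) * M = (LINT x|lborel. h x) + c/2"
    using c by (simp add: M_def field_simps)
  ultimately show False using c by linarith
qed

section \<open>The spaces H1 and Z1\<close>

lemma norm_sq_primitive_diff:
  assumes w: "is_primitive w h" and ab: "a \<le> b"
  shows "(norm (w b))\<^sup>2 - (norm (w a))\<^sup>2 = integral {a..b} (\<lambda>x. 2 * cinner (w x) (h x))"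
proof -
  have prim: "is_primitive (\<lambda>x. w x * cnj (w x)) (\<lambda>x. w x * cnj (h x) + h x * cnj (w x))"
    by (rule is_primitive_mult[OF w is_primitive_cnj[OF w]])
  have "(norm (w b))\<^sup>2 - (norm (w a))\<^sup>2 = Re (w b * cnj (w b) - w a * cnj (w a))"
    by (simp flip: complex_norm_square)
  also have "\<dots> = Re (integral {a..b} (\<lambda>x. w x * cnj (h x) + h x * cnj (w x)))"
    by (simp add: is_primitive_diff_eq[OF prim ab])
  also have "\<dots> = integral {a..b} (\<lambda>x. Re (w x * cnj (h x) + h x * cnj (w x)))"
    using integral_linear[OF is_primitive_integrable[OF prim] bounded_linear_Re] by (simp add: o_def)
  also have "\<dots> = integral {a..b} (\<lambda>x. 2 * cinner (w x) (h x))"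
    by (simp add: cinner_def algebra_simps)
  finally show ?thesis .
qed

lemma L2_primitive_bounded:
  assumes w: "is_primitive w h" and "w \<in> L2" "h \<in> L2"
  shows "\<exists>B. \<forall>x. norm (w x) \<le> B"
proof -
  define q where "q = (\<lambda>x. 2 * cinner (w x) (h x))"
  have q: "integrable lborel q"
    unfolding q_def using integrable_cinner_L2[OF assms(2,3), of 1] by simp
  define B where "B = (norm (w 0))\<^sup>2 + (LINT x|lborel. \<bar>q x\<bar>)"
  have "(norm (w x))\<^sup>2 \<le> B" for x
  proof (cases "0 \<le> x")
    case True
    then show ?thesis
      using norm_sq_primitive_diff[OF w True, folded q_def] abs_integral_Icc_le[OF q, of 0 x]
      unfolding B_def abs_le_iff by linarith
  next
    case False
    then show ?thesis
      using norm_sq_primitive_diff[OF w, of x 0, folded q_def] abs_integral_Icc_le[OF q, of x 0]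
      unfolding B_def abs_le_iff by linarith
  qed
  then have "norm (w x) \<le> sqrt B" for x
    using real_sqrt_le_mono[of "(norm (w x))\<^sup>2" B] by simp
  then show ?thesis by blast
qed

lemma L2_primitive_tendsto_zero_at_top:
  assumes w: "is_primitive w h" and wL2: "w \<in> L2" and "h \<in> L2"
  shows "(w \<longlongrightarrow> 0) at_top"
proof -
  define q where "q = (\<lambda>x. 2 * cinner (w x) (h x))"
  have q: "integrable lborel q"
    unfolding q_def using integrable_cinner_L2[OF assms(2,3), of 1] by simp
  define c where "c = (norm (w 0))\<^sup>2 + (LBINT x:{0..}. q x)"
  have "(norm (w 0))\<^sup>2 + integral {0..b} q = (norm (w b))\<^sup>2" if "0 \<le> b" for b
    using norm_sq_primitive_diff[OF w that, folded q_def] by simp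
  then have "eventually (\<lambda>b. (norm (w 0))\<^sup>2 + integral {0..b} q = (norm (w b))\<^sup>2) at_top"
    by (rule eventually_at_top_linorderI)
  moreover have "((\<lambda>b. (norm (w 0))\<^sup>2 + integral {0..b} q) \<longlongrightarrow> c) at_top"
    unfolding c_def by (intro tendsto_intros tendsto_integral_Icc_at_top q)
  ultimately have lim: "((\<lambda>b. (norm (w b))\<^sup>2) \<longlongrightarrow> c) at_top"
    by (rule Lim_transform_eventually[rotated])
  have "c = 0"
    using wL2 by (intro limit_zero_if_integrable_nonneg[OF _ _ lim]) (auto simp: L2_def)
  with lim have "((\<lambda>b. sqrt ((norm (w b))\<^sup>2)) \<longlongrightarrow> sqrt 0) at_top"
    by (intro tendsto_real_sqrt) simp
  then show ?thesis
    by (simp add: tendsto_norm_zero_iff)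
qed

lemma L2_primitive_tendsto_zero_at_bot:
  assumes w: "is_primitive w h" and "w \<in> L2" "h \<in> L2"
  shows "(w \<longlongrightarrow> 0) at_bot"
proof -
  have "(\<lambda>x. - h (- x)) \<in> L2"
    using L2_reflect[OF assms(3)] by (simp add: L2_def)
  then have "((\<lambda>x. w (- x)) \<longlongrightarrow> 0) at_top"
    by (intro L2_primitive_tendsto_zero_at_top[OF is_primitive_reflect[OF w] L2_reflect[OF assms(2)]])
  then show ?thesis
    by (simp add: filterlim_at_bot_mirror)
qed

lemma norm_limit_eq_1_at_top:
  assumes "(\<lambda>x. complex_of_real (1 - (cmod (V0 x))\<^sup>2)) \<in> L2" and "(V0 \<longlongrightarrow> l) at_top"
  shows "norm l = 1"
proof -
  have "((\<lambda>x. (1 - (cmod (V0 x))\<^sup>2)\<^sup>2) \<longlongrightarrow> (1 - (cmod l)\<^sup>2)\<^sup>2) at_top"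
    by (intro tendsto_intros assms(2))
  moreover have "integrable lborel (\<lambda>x. (cmod (complex_of_real (1 - (cmod (V0 x))\<^sup>2)))\<^sup>2)"
    using assms(1) unfolding L2_def by blast
  then have "integrable lborel (\<lambda>x. (1 - (cmod (V0 x))\<^sup>2)\<^sup>2)"
    unfolding norm_of_real power2_abs .
  ultimately have "(1 - (cmod l)\<^sup>2)\<^sup>2 = 0"
    by (intro limit_zero_if_integrable_nonneg) auto
  then have "(cmod l)\<^sup>2 = 1\<^sup>2" by simp
  then show ?thesis by (rule power2_eq_imp_eq) auto
qed

lemma L2_if_norm_bounded:
  assumes f: "f \<in> borel_measurable lborel" and "g1 \<in> L2" "g2 \<in> L2"
    and bound: "AE x in lborel. norm (f x) \<le> norm (g1 x) + c * norm (g2 x)"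
  shows "f \<in> L2"
  unfolding L2_def
proof (intro CollectI conjI f)
  show "integrable lborel (\<lambda>x. (norm (f x))\<^sup>2)"
  proof (rule Bochner_Integration.integrable_bound)
    show "integrable lborel (\<lambda>x. 2 * (norm (g1 x))\<^sup>2 + 2 * c\<^sup>2 * (norm (g2 x))\<^sup>2)"
      using assms(2,3) by (simp add: L2_def)
    show "AE x in lborel. norm ((norm (f x))\<^sup>2) \<le> norm (2 * (norm (g1 x))\<^sup>2 + 2 * c\<^sup>2 * (norm (g2 x))\<^sup>2)"
      using bound
    proof eventually_elim
      case (elim x)
      define a where "a = norm (g1 x)"
      define b where "b = c * norm (g2 x)"
      have "(norm (f x))\<^sup>2 \<le> (a + b)\<^sup>2"
        using elim by (intro power_mono) (simp_all add: a_def b_def)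
      also have "(a + b)\<^sup>2 + (a - b)\<^sup>2 = 2 * a\<^sup>2 + 2 * b\<^sup>2"
        by (simp add: power2_eq_square algebra_simps)
      then have "(a + b)\<^sup>2 \<le> 2 * a\<^sup>2 + 2 * b\<^sup>2"
        using zero_le_power2[of "a - b"] by linarith
      finally show ?case
        by (simp add: a_def b_def power_mult_distrib)
    qed
  qed (use f in measurable)
qed

lemma abs_norm_sq_add_diff_le:
  fixes z w :: complex
  assumes "norm z \<le> C" "norm w \<le> B"
  shows "\<bar>(norm (z + w))\<^sup>2 - (norm z)\<^sup>2\<bar> \<le> (2 * C + B) * norm w"
proof -
  have "(norm (z + w))\<^sup>2 - (norm z)\<^sup>2 = (norm (z + w) - norm z) * (norm (z + w) + norm z)"
    by (simp add: power2_eq_square algebra_simps)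
  then have "\<bar>(norm (z + w))\<^sup>2 - (norm z)\<^sup>2\<bar>
      = \<bar>norm (z + w) - norm z\<bar> * (norm (z + w) + norm z)"
    by (simp add: abs_mult)
  also have "\<dots> \<le> norm w * (2 * C + B)"
  proof (rule mult_mono)
    show "\<bar>norm (z + w) - norm z\<bar> \<le> norm w"
      using norm_triangle_ineq3[of "z + w" z] by simp
    show "norm (z + w) + norm z \<le> 2 * C + B"
      using norm_triangle_ineq[of z w] assms by simp
  qed simp_all
  finally show ?thesis by (simp add: mult.commute)
qed

lemma H1_is_primitive: "w \<in> H1 \<Longrightarrow> is_primitive w (weak_deriv w)"
  unfolding H1_def by (auto intro: has_weak_deriv_imp_is_primitive has_weak_deriv_weak_deriv)

lemma Z1_is_primitive: "V0 \<in> Z1 \<Longrightarrow> is_primitive V0 (weak_deriv V0)"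
  unfolding Z1_def X1_def by (auto intro: has_weak_deriv_imp_is_primitive has_weak_deriv_weak_deriv)

lemma Z1_add_H1:
  assumes V0: "V0 \<in> Z1" and w: "w \<in> H1"
  shows "(\<lambda>x. V0 x + w x) \<in> Z1"
proof -
  define V where "V = (\<lambda>x. V0 x + w x)"
  obtain g0 where g0: "has_weak_deriv V0 g0" and g0L2: "weak_deriv V0 \<in> L2"
    and eta: "(\<lambda>x. complex_of_real (1 - (cmod (V0 x))\<^sup>2)) \<in> L2"
    and V0_Linf: "V0 \<in> Linf"
    using V0 by (auto simp: Z1_def X1_def)
  obtain h where h: "has_weak_deriv w h" and hL2: "weak_deriv w \<in> L2" and wL2: "w \<in> L2"
    using w by (auto simp: H1_def)
  obtain C0 where C0: "AE x in lborel. cmod (V0 x) \<le> C0"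
    using V0_Linf by (auto simp: Linf_def)
  obtain Bw where Bw: "\<And>x. norm (w x) \<le> Bw"
    using L2_primitive_bounded[OF H1_is_primitive[OF w] wL2 hL2] by blast
  obtain l1 l2 where l: "(V0 \<longlongrightarrow> l1) at_top" "(V0 \<longlongrightarrow> l2) at_bot"
    using V0 by (auto simp: Z1_def)
  have w0: "(w \<longlongrightarrow> 0) at_top" "(w \<longlongrightarrow> 0) at_bot"
    using H1_is_primitive[OF w] wL2 hL2
    by (auto intro: L2_primitive_tendsto_zero_at_top L2_primitive_tendsto_zero_at_bot)
  have [measurable]: "V0 \<in> borel_measurable lborel" "w \<in> borel_measurable lborel"
    using V0_Linf wL2 by (auto simp: Linf_def L2_def)
  have V_deriv: "has_weak_deriv V (\<lambda>x. weak_deriv V0 x + weak_deriv w x)"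
    unfolding V_def
    by (intro has_weak_deriv_add has_weak_deriv_weak_deriv[OF g0] has_weak_deriv_weak_deriv[OF h])
  have "V \<in> Linf"
    unfolding Linf_def V_def
  proof (intro CollectI conjI exI)
    show "AE x in lborel. cmod (V0 x + w x) \<le> C0 + Bw"
      using C0
    proof eventually_elim
      case (elim x)
      then show ?case using norm_triangle_ineq[of "V0 x" "w x"] Bw[of x] by linarith
    qed
  qed measurable
  moreover have "weak_deriv V \<in> L2"
  proof (rule L2_if_norm_bounded[OF _ g0L2 hL2, of _ 1])
    show "weak_deriv V \<in> borel_measurable lborel"
      using has_weak_deriv_measurable[OF has_weak_deriv_weak_deriv[OF V_deriv]] .
    show "AE x in lborel. norm (weak_deriv V x) \<le> norm (weak_deriv V0 x) + 1 * norm (weak_deriv w x)"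
      using has_weak_deriv_unique[OF has_weak_deriv_weak_deriv[OF V_deriv] V_deriv]
      by eventually_elim (simp add: norm_triangle_ineq)
  qed
  moreover have "(\<lambda>x. complex_of_real (1 - (cmod (V x))\<^sup>2)) \<in> L2"
  proof (rule L2_if_norm_bounded[OF _ eta wL2, of _ "2 * C0 + Bw"])
    show "AE x in lborel. norm (complex_of_real (1 - (cmod (V x))\<^sup>2))
        \<le> norm (complex_of_real (1 - (cmod (V0 x))\<^sup>2)) + (2 * C0 + Bw) * norm (w x)"
      using C0
    proof eventually_elim
      case (elim x)
      then have "\<bar>(norm (V0 x + w x))\<^sup>2 - (norm (V0 x))\<^sup>2\<bar> \<le> (2 * C0 + Bw) * norm (w x)"
        using Bw by (intro abs_norm_sq_add_diff_le)
      then show ?case by (simp only: norm_of_real V_def)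
    qed
  qed (simp add: V_def)
  moreover have "(V \<longlongrightarrow> l1) at_top" "(V \<longlongrightarrow> l2) at_bot"
    unfolding V_def using tendsto_add[OF l(1) w0(1)] tendsto_add[OF l(2) w0(2)] by simp_all
  ultimately show ?thesis
    unfolding Z1_def X1_def V_def[symmetric] using V_deriv by blast
qed

section \<open>Momentum\<close>

lemma norm_ge_half_if_near_1: "z \<in> ball (1::complex) (1/2) \<Longrightarrow> norm z \<ge> 1/2"
  using norm_triangle_ineq2[of 1 z] by (simp add: dist_norm)

lemma lipschitz_on_inverse_near_1: "4-lipschitz_on (ball (1::complex) (1/2)) inverse"
proof (rule lipschitz_onI)
  fix z y :: complex assume zy: "z \<in> ball 1 (1/2)" "y \<in> ball 1 (1/2)"
  have z: "norm z \<ge> 1/2" and y: "norm y \<ge> 1/2"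
    using norm_ge_half_if_near_1[OF zy(1)] norm_ge_half_if_near_1[OF zy(2)] .
  have "z \<noteq> 0" "y \<noteq> 0" using z y by auto
  then have "inverse z - inverse y = (y - z) / (z * y)"
    by (simp add: field_simps)
  then have "dist (inverse z) (inverse y) = norm (z - y) / (norm z * norm y)"
    by (simp add: dist_norm norm_divide norm_mult norm_minus_commute)
  also have "\<dots> \<le> norm (z - y) / (1/4)"
    using mult_mono[OF z y] z by (intro divide_left_mono) auto
  finally show "dist (inverse z) (inverse y) \<le> 4 * dist z y"
    by (simp add: dist_norm)
qed simp

lemma Ln_remainder_near_1:
  assumes z: "z \<in> ball (1::complex) (1/2)" and y: "y \<in> ball (1::complex) (1/2)"
  shows "norm (Ln z - Ln y - inverse y * (z - y)) \<le> 4 * (norm (z - y))\<^sup>2"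
proof -
  define S where "S = ball (1::complex) (1/2) \<inter> cball y (norm (z - y))"
  define f where "f \<xi> = Ln \<xi> - \<xi> * inverse y" for \<xi>
  have "convex S" unfolding S_def by (intro convex_Int convex_ball convex_cball)
  have deriv: "(f has_field_derivative (inverse \<xi> - inverse y)) (at \<xi> within S)" if "\<xi> \<in> S" for \<xi>
  proof -
    have "1 - Re \<xi> \<le> cmod (1 - \<xi>)"
      using abs_le_D1[OF abs_Re_le_cmod[of "1 - \<xi>"]] by simp
    moreover have "cmod (1 - \<xi>) < 1/2"
      using that by (simp add: S_def dist_norm)
    ultimately have "\<xi> \<notin> \<real>\<^sub>\<le>\<^sub>0"
      by (simp add: complex_nonpos_Reals_iff)
    then have "(Ln has_field_derivative inverse \<xi>) (at \<xi>)"
      by (rule has_field_derivative_Ln)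
    then have "(f has_field_derivative (inverse \<xi> - 1 * inverse y)) (at \<xi>)"
      unfolding f_def[abs_def] by (intro DERIV_diff DERIV_cmult_right DERIV_ident)
    then show ?thesis by (simp add: has_field_derivative_at_within)
  qed
  have bound: "norm (inverse \<xi> - inverse y) \<le> 4 * norm (z - y)" if "\<xi> \<in> S" for \<xi>
  proof -
    have "norm (inverse \<xi> - inverse y) \<le> 4 * norm (\<xi> - y)"
      using lipschitz_on_normD[OF lipschitz_on_inverse_near_1] that y by (simp add: S_def)
    also have "\<dots> \<le> 4 * norm (z - y)"
      using that by (simp add: S_def dist_norm norm_minus_commute)
    finally show ?thesis .
  qed
  have zS: "z \<in> S" and yS: "y \<in> S"
    using z y by (auto simp: S_def dist_norm norm_minus_commute)
  have "norm (f z - f y) \<le> (4 * norm (z - y)) * norm (z - y)"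
    by (rule field_differentiable_bound[OF \<open>convex S\<close> deriv bound zS yS])
  moreover have "f z - f y = Ln z - Ln y - inverse y * (z - y)"
    by (simp add: f_def algebra_simps)
  ultimately show ?thesis by (simp add: power2_eq_square mult.assoc)
qed

lemma absolutely_integrable_cinner:
  fixes u h :: "real \<Rightarrow> complex"
  assumes "continuous_on {a..b} u" and "h absolutely_integrable_on {a..b}"
  shows "(\<lambda>t. cinner (u t) (h t)) absolutely_integrable_on {a..b}"
proof -
  have "(\<lambda>x. cnj (h x)) absolutely_integrable_on {a..b}"
    using absolutely_integrable_linear[OF assms(2) bounded_linear_cnj] by (simp add: o_def)
  then have "(\<lambda>t. u t * cnj (h t)) absolutely_integrable_on {a..b}"
    by (rule absolutely_integrable_continuous_mult[OF assms(1)])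
  then have "(Re \<circ> (\<lambda>t. u t * cnj (h t))) absolutely_integrable_on {a..b}"
    by (rule absolutely_integrable_linear[OF _ bounded_linear_Re])
  then show ?thesis by (simp add: o_def cinner_def)
qed

lemma absolutely_integrable_cinner_primitives:
  assumes "is_primitive u g" "is_primitive v h"
  shows "(\<lambda>t. cinner (\<i> * u t) (h t)) absolutely_integrable_on {a..b}"
  using is_primitive_continuous_on[OF assms(1)]
  by (intro absolutely_integrable_cinner continuous_intros is_primitive_absolutely_integrable[OF assms(2)])

lemma cinner_i_eq_Im_divide:
  assumes "z \<noteq> 0"
  shows "cinner (\<i> * z) w = (norm z)\<^sup>2 * Im (w / z)"
proof -
  have "(Re z)\<^sup>2 + (Im z)\<^sup>2 \<noteq> 0" using assms by (simp add: complex_eq_iff)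
  then show ?thesis by (simp add: cinner_def Im_divide cmod_power2 field_simps)
qed

lemma momentum_integral_near_unit_limit:
  fixes V0 g :: "real \<Rightarrow> complex"
  assumes prim: "is_primitive V0 g" and l: "norm l = 1" and ab: "a \<le> b"
    and near: "\<And>t. t \<in> {a..b} \<Longrightarrow> norm (V0 t - l) < 1/2"
  shows "integral {a..b} (\<lambda>t. cinner (\<i> * V0 t) (g t)) =
    Im (Ln (cnj l * V0 b)) - Im (Ln (cnj l * V0 a)) +
    integral {a..b} (\<lambda>t. ((norm (V0 t))\<^sup>2 - 1) * Im (g t / V0 t))"
proof -
  have ll: "cnj l * l = 1"
    using complex_norm_square[of l] l by (simp add: mult.commute)
  define u where "u t = cnj l * V0 t" for t
  have u_near: "u t \<in> ball 1 (1/2)" if "t \<in> {a..b}" for t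
  proof -
    have "1 - u t = cnj l * (l - V0 t)" using ll by (simp add: u_def algebra_simps)
    then have "norm (1 - u t) = norm (V0 t - l)" using l by (simp add: norm_mult norm_minus_commute)
    then show ?thesis using near[OF that] by (simp add: dist_norm)
  qed
  have V0_nz: "V0 t \<noteq> 0" if "t \<in> {a..b}" for t
    using norm_ge_half_if_near_1[OF u_near[OF that]] by (auto simp: u_def)
  have u_prim: "is_primitive u (\<lambda>t. cnj l * g t)"
    unfolding u_def[abs_def] by (rule is_primitive_cmult[OF prim])
  note Ln_chain = primitive_comp_integral[OF u_prim ab u_near Ln_remainder_near_1
      lipschitz_on_inverse_near_1 zero_le_numeral]
  have phase: "inverse (u t) * (cnj l * g t) = g t / V0 t" if "t \<in> {a..b}" for t
    using ll V0_nz[OF that] by (auto simp: u_def field_simps)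
  have phase_int: "(\<lambda>t. g t / V0 t) integrable_on {a..b}"
    using Ln_chain(1) phase unfolding absolutely_integrable_on_def
    by (blast intro: integrable_eq)
  have "integral {a..b} (\<lambda>t. Im (g t / V0 t)) = Im (Ln (u b)) - Im (Ln (u a))"
  proof -
    have "integral {a..b} (\<lambda>t. inverse (u t) * (cnj l * g t)) = integral {a..b} (\<lambda>t. g t / V0 t)"
      by (rule integral_cong) (rule phase)
    then have "integral {a..b} (\<lambda>t. g t / V0 t) = Ln (u b) - Ln (u a)"
      using Ln_chain(2) by simp
    then show ?thesis
      using integral_linear[OF phase_int bounded_linear_Im] by (simp add: o_def)
  qed
  moreover have "integral {a..b} (\<lambda>t. cinner (\<i> * V0 t) (g t))
      = integral {a..b} (\<lambda>t. Im (g t / V0 t)) + integral {a..b} (\<lambda>t. ((norm (V0 t))\<^sup>2 - 1) * Im (g t / V0 t))"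
  proof -
    have rho_int: "(\<lambda>t. cinner (\<i> * V0 t) (g t)) integrable_on {a..b}"
      using absolutely_integrable_cinner_primitives[OF prim prim]
      by (simp add: absolutely_integrable_on_def)
    have Im_int: "(\<lambda>t. Im (g t / V0 t)) integrable_on {a..b}"
      using integrable_linear[OF phase_int bounded_linear_Im] by (simp add: o_def)
    have split: "cinner (\<i> * V0 t) (g t) = Im (g t / V0 t) + ((norm (V0 t))\<^sup>2 - 1) * Im (g t / V0 t)"
      if "t \<in> {a..b}" for t
      using cinner_i_eq_Im_divide[OF V0_nz[OF that]] by (simp add: algebra_simps)
    have "(\<lambda>t. ((norm (V0 t))\<^sup>2 - 1) * Im (g t / V0 t)) integrable_on {a..b}"
      by (rule integrable_eq[OF integrable_diff[OF rho_int Im_int]]) (simp add: split)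
    moreover have "integral {a..b} (\<lambda>t. cinner (\<i> * V0 t) (g t))
        = integral {a..b} (\<lambda>t. Im (g t / V0 t) + ((norm (V0 t))\<^sup>2 - 1) * Im (g t / V0 t))"
      by (rule integral_cong) (rule split)
    ultimately show ?thesis
      by (simp add: integral_add[OF Im_int])
  qed
  ultimately show ?thesis by (simp add: u_def)
qed

lemma integrable_momentum_remainder:
  fixes V0 g :: "real \<Rightarrow> complex"
  assumes [measurable]: "V0 \<in> borel_measurable lborel" and gL2: "g \<in> L2"
    and eta: "(\<lambda>x. complex_of_real (1 - (cmod (V0 x))\<^sup>2)) \<in> L2"
    and [measurable]: "A \<in> sets borel" and large: "\<And>x. x \<in> A \<Longrightarrow> 1/2 \<le> norm (V0 x)"
  shows "integrable lborel (\<lambda>x. indicator A x * (((norm (V0 x))\<^sup>2 - 1) * Im (g x / V0 x)))"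
proof (rule integrable_if_bounded_by_L2_product[OF eta gL2, of _ 2])
  have [measurable]: "g \<in> borel_measurable lborel"
    using gL2 by (simp add: L2_def)
  show "(\<lambda>x. indicator A x * (((norm (V0 x))\<^sup>2 - 1) * Im (g x / V0 x))) \<in> borel_measurable lborel"
    by measurable
  fix x
  show "\<bar>indicator A x * (((norm (V0 x))\<^sup>2 - 1) * Im (g x / V0 x))\<bar>
    \<le> 2 * (norm (complex_of_real (1 - (cmod (V0 x))\<^sup>2)) * norm (g x))"
  proof (cases "x \<in> A")
    case True
    then have "norm (g x) / norm (V0 x) \<le> norm (g x) / (1/2)"
      using large[OF True] by (intro divide_left_mono) auto
    then have "\<bar>Im (g x / V0 x)\<bar> \<le> 2 * norm (g x)"
      using abs_Im_le_cmod[of "g x / V0 x"] by (simp add: norm_divide)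
    then have "\<bar>1 - (norm (V0 x))\<^sup>2\<bar> * \<bar>Im (g x / V0 x)\<bar> \<le> \<bar>1 - (norm (V0 x))\<^sup>2\<bar> * (2 * norm (g x))"
      by (rule mult_left_mono) simp
    then show ?thesis
      using True unfolding norm_of_real by (simp add: abs_mult abs_minus_commute mult.left_commute[of 2])
  qed simp
qed

lemma momentum_integral_converges_at_top:
  fixes V0 g :: "real \<Rightarrow> complex"
  assumes prim: "is_primitive V0 g" and gL2: "g \<in> L2"
    and eta: "(\<lambda>x. complex_of_real (1 - (cmod (V0 x))\<^sup>2)) \<in> L2"
    and lim: "(V0 \<longlongrightarrow> l) at_top"
  shows "\<exists>L. ((\<lambda>R. integral {0..R} (\<lambda>t. cinner (\<i> * V0 t) (g t))) \<longlongrightarrow> L) at_top"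
proof -
  define rho where "rho t = cinner (\<i> * V0 t) (g t)" for t
  define sig where "sig t = ((norm (V0 t))\<^sup>2 - 1) * Im (g t / V0 t)" for t
  define phase where "phase t = Im (Ln (cnj l * V0 t))" for t
  have l: "norm l = 1" by (rule norm_limit_eq_1_at_top[OF eta lim])
  obtain N where N: "N \<ge> 0" and near: "\<And>x. x \<ge> N \<Longrightarrow> norm (V0 x - l) < 1/2"
  proof -
    obtain N1 where "\<And>x. x \<ge> N1 \<Longrightarrow> dist (V0 x) l < 1/2"
      using tendstoD[OF lim, of "1/2"] by (auto simp: eventually_at_top_linorder)
    then show ?thesis by (intro that[of "max N1 0"]) (auto simp: dist_norm)
  qed
  define q where "q x = indicator {N..} x * sig x" for x
  have "1/2 \<le> norm (V0 x)" if "x \<in> {N..}" for x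
    using near[of x] that norm_triangle_ineq2[of l "V0 x"] l by (simp add: norm_minus_commute)
  then have q_int: "integrable lborel q"
    unfolding q_def[abs_def] sig_def
    by (intro integrable_momentum_remainder[OF borel_measurable_primitive[OF prim] gL2 eta]) auto
  have decomposition: "integral {0..R} rho = integral {0..N} rho - phase N + (phase R + integral {N..R} q)"
    if "R \<ge> N" for R
  proof -
    have "integral {0..R} rho = integral {0..N} rho + integral {N..R} rho"
      using absolutely_integrable_cinner_primitives[OF prim prim] N that
      by (intro Henstock_Kurzweil_Integration.integral_combine[symmetric])
        (auto simp: rho_def[abs_def] absolutely_integrable_on_def)
    moreover have "integral {N..R} rho = phase R - phase N + integral {N..R} sig"
      unfolding rho_def[abs_def] sig_def[abs_def] phase_def
      using that near by (intro momentum_integral_near_unit_limit[OF prim l]) auto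
    moreover have "integral {N..R} sig = integral {N..R} q"
      by (rule integral_cong) (simp add: q_def)
    ultimately show ?thesis by simp
  qed
  have "((\<lambda>R. cnj l * V0 R) \<longlongrightarrow> 1) at_top"
    using tendsto_mult[OF tendsto_const lim, of "cnj l"] complex_norm_square[of l] l
    by (simp add: mult.commute)
  then have "(phase \<longlongrightarrow> Im (Ln 1)) at_top"
    unfolding phase_def by (intro tendsto_Im tendsto_Ln) auto
  then have "((\<lambda>R. integral {0..N} rho - phase N + (phase R + integral {N..R} q))
      \<longlongrightarrow> integral {0..N} rho - phase N + (0 + (LBINT x:{N..}. q x))) at_top"
    by (intro tendsto_intros tendsto_integral_Icc_at_top q_int) simp
  moreover have "eventually (\<lambda>R. integral {0..N} rho - phase N + (phase R + integral {N..R} q)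
      = integral {0..R} rho) at_top"
    by (rule eventually_at_top_linorderI[of N]) (rule decomposition[symmetric])
  ultimately have "((\<lambda>R. integral {0..R} rho) \<longlongrightarrow> integral {0..N} rho - phase N + (0 + (LBINT x:{N..}. q x))) at_top"
    by (rule Lim_transform_eventually)
  then show ?thesis unfolding rho_def by blast
qed

lemma momentum_integral_converges_at_bot:
  fixes V0 g :: "real \<Rightarrow> complex"
  assumes prim: "is_primitive V0 g" and gL2: "g \<in> L2"
    and eta: "(\<lambda>x. complex_of_real (1 - (cmod (V0 x))\<^sup>2)) \<in> L2"
    and lim: "(V0 \<longlongrightarrow> l) at_bot"
  shows "\<exists>L. ((\<lambda>R. integral {-R..0} (\<lambda>t. cinner (\<i> * V0 t) (g t))) \<longlongrightarrow> L) at_top"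
proof -
  have "(\<lambda>x. - g (- x)) \<in> L2"
    using L2_reflect[OF gL2] by (simp add: L2_def)
  moreover have "((\<lambda>x. V0 (- x)) \<longlongrightarrow> l) at_top"
    using lim by (simp add: filterlim_at_bot_mirror)
  ultimately obtain L where
    L: "((\<lambda>R. integral {0..R} (\<lambda>t. cinner (\<i> * V0 (- t)) (- g (- t)))) \<longlongrightarrow> L) at_top"
    using momentum_integral_converges_at_top[OF is_primitive_reflect[OF prim] _ L2_reflect[OF eta]]
    by blast
  have "integral {0..R} (\<lambda>t. cinner (\<i> * V0 (- t)) (- g (- t)))
      = - integral {-R..0} (\<lambda>t. cinner (\<i> * V0 t) (g t))" for R
  proof -
    have "cinner z (- w) = - cinner z w" for z w by (simp add: cinner_def)
    then have "integral {0..R} (\<lambda>t. cinner (\<i> * V0 (- t)) (- g (- t)))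
        = - integral {- 0..- (- R)} (\<lambda>t. cinner (\<i> * V0 (- t)) (g (- t)))"
      by (simp add: integral_neg)
    also have "\<dots> = - integral {-R..0} (\<lambda>t. cinner (\<i> * V0 t) (g t))"
      by (simp only: Henstock_Kurzweil_Integration.integral_reflect_real[of 0 "-R" "\<lambda>t. cinner (\<i> * V0 t) (g t)"])
    finally show ?thesis .
  qed
  then have "((\<lambda>R. integral {-R..0} (\<lambda>t. cinner (\<i> * V0 t) (g t))) \<longlongrightarrow> - L) at_top"
    using tendsto_minus[OF L] by simp
  then show ?thesis by blast
qed

lemma momentum_integral_converges:
  fixes V0 g :: "real \<Rightarrow> complex"
  assumes prim: "is_primitive V0 g" and gL2: "g \<in> L2"
    and eta: "(\<lambda>x. complex_of_real (1 - (cmod (V0 x))\<^sup>2)) \<in> L2"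
    and "(V0 \<longlongrightarrow> l1) at_top" "(V0 \<longlongrightarrow> l2) at_bot"
  shows "\<exists>L. ((\<lambda>R. integral {-R..R} (\<lambda>t. cinner (\<i> * V0 t) (g t))) \<longlongrightarrow> L) at_top"
proof -
  define rho where "rho t = cinner (\<i> * V0 t) (g t)" for t
  obtain A B where "((\<lambda>R. integral {0..R} rho) \<longlongrightarrow> A) at_top" "((\<lambda>R. integral {-R..0} rho) \<longlongrightarrow> B) at_top"
    using momentum_integral_converges_at_top[OF prim gL2 eta assms(4)]
      momentum_integral_converges_at_bot[OF prim gL2 eta assms(5)]
    unfolding rho_def by blast
  then have "((\<lambda>R. integral {-R..0} rho + integral {0..R} rho) \<longlongrightarrow> B + A) at_top"
    by (rule tendsto_add[rotated])
  moreover have "eventually (\<lambda>R. integral {-R..0} rho + integral {0..R} rho = integral {-R..R} rho) at_top"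
  proof (rule eventually_at_top_linorderI[of 0])
    fix R :: real assume "0 \<le> R"
    then show "integral {-R..0} rho + integral {0..R} rho = integral {-R..R} rho"
      using absolutely_integrable_cinner_primitives[OF prim prim]
      by (intro Henstock_Kurzweil_Integration.integral_combine)
        (auto simp: rho_def[abs_def] absolutely_integrable_on_def)
  qed
  ultimately have "((\<lambda>R. integral {-R..R} rho) \<longlongrightarrow> B + A) at_top"
    by (rule Lim_transform_eventually)
  then show ?thesis unfolding rho_def by blast
qed

lemma cinner_integration_by_parts:
  assumes u: "is_primitive u g" and w: "is_primitive w h" and ab: "a \<le> b"
  shows "integral {a..b} (\<lambda>x. cinner (\<i> * u x) (h x))
    = cinner (\<i> * u b) (w b) - cinner (\<i> * u a) (w a) + integral {a..b} (\<lambda>x. cinner (\<i> * w x) (g x))"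
proof -
  have prim: "is_primitive (\<lambda>x. (\<i> * u x) * cnj (w x)) (\<lambda>x. (\<i> * u x) * cnj (h x) + (\<i> * g x) * cnj (w x))"
    by (rule is_primitive_mult[OF is_primitive_cmult[OF u] is_primitive_cnj[OF w]])
  have "cinner (\<i> * u b) (w b) - cinner (\<i> * u a) (w a) = Re ((\<i> * u b) * cnj (w b) - (\<i> * u a) * cnj (w a))"
    by (simp add: cinner_def)
  also have "\<dots> = Re (integral {a..b} (\<lambda>x. (\<i> * u x) * cnj (h x) + (\<i> * g x) * cnj (w x)))"
    by (simp add: is_primitive_diff_eq[OF prim ab])
  also have "\<dots> = integral {a..b} (\<lambda>x. Re ((\<i> * u x) * cnj (h x) + (\<i> * g x) * cnj (w x)))"
    using integral_linear[OF is_primitive_integrable[OF prim] bounded_linear_Re] by (simp add: o_def)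
  also have "\<dots> = integral {a..b} (\<lambda>x. cinner (\<i> * u x) (h x) - cinner (\<i> * w x) (g x))"
    by (rule integral_cong) (simp add: cinner_def algebra_simps)
  also have "\<dots> = integral {a..b} (\<lambda>x. cinner (\<i> * u x) (h x)) - integral {a..b} (\<lambda>x. cinner (\<i> * w x) (g x))"
    using absolutely_integrable_cinner_primitives[OF u w] absolutely_integrable_cinner_primitives[OF w u]
    by (intro integral_diff) (auto simp: absolutely_integrable_on_def)
  finally show ?thesis by simp
qed

lemma set_integral_momentum_density:
  assumes prim: "is_primitive v g" and meas: "k \<in> borel_measurable lborel" "g \<in> borel_measurable lborel"
    and AE: "AE x in lborel. k x = g x"
  shows "(LBINT x:{a..b}. cinner (\<i> * v x) (k x)) = integral {a..b} (\<lambda>x. cinner (\<i> * v x) (g x))"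
proof -
  have [measurable]: "v \<in> borel_measurable lborel" "k \<in> borel_measurable lborel" "g \<in> borel_measurable lborel"
    using borel_measurable_primitive[OF prim] meas by auto
  have "(LBINT x:{a..b}. cinner (\<i> * v x) (k x)) = (LBINT x:{a..b}. cinner (\<i> * v x) (g x))"
    using AE by (intro set_lebesgue_integral_cong_AE) (auto elim: eventually_mono)
  also have "\<dots> = integral {a..b} (\<lambda>x. cinner (\<i> * v x) (g x))"
    by (intro set_borel_integral_eq_integral set_integrable_lborel_if_absolutely_integrable
        absolutely_integrable_cinner_primitives[OF prim prim]) measurable
  finally show ?thesis .
qed

lemma momentum_eqI:
  assumes "((\<lambda>R. LBINT x:{-R..R}. cinner (\<i> * v x) (weak_deriv v x)) \<longlongrightarrow> L) at_top"
  shows "momentum v = L / 2"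
  unfolding momentum_def
  by (rule tendsto_Lim) (use tendsto_mult[OF tendsto_const assms, of "1/2"] in simp_all)

lemma tendsto_momentum_integral:
  assumes V0: "V0 \<in> Z1"
  shows "((\<lambda>R. LBINT x:{-R..R}. cinner (\<i> * V0 x) (weak_deriv V0 x)) \<longlongrightarrow> 2 * momentum V0) at_top"
proof -
  have prim: "is_primitive V0 (weak_deriv V0)" by (rule Z1_is_primitive[OF V0])
  obtain l1 l2 where "(V0 \<longlongrightarrow> l1) at_top" "(V0 \<longlongrightarrow> l2) at_bot"
    and g0L2: "weak_deriv V0 \<in> L2"
    and eta: "(\<lambda>x. complex_of_real (1 - (cmod (V0 x))\<^sup>2)) \<in> L2"
    using V0 by (auto simp: Z1_def X1_def)
  then obtain A where A: "((\<lambda>R. integral {-R..R} (\<lambda>t. cinner (\<i> * V0 t) (weak_deriv V0 t))) \<longlongrightarrow> A) at_top"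
    using momentum_integral_converges[OF prim] by blast
  have "weak_deriv V0 \<in> borel_measurable lborel"
    using g0L2 by (simp add: L2_def)
  then have lim: "((\<lambda>R. LBINT x:{-R..R}. cinner (\<i> * V0 x) (weak_deriv V0 x)) \<longlongrightarrow> A) at_top"
    using A by (simp add: set_integral_momentum_density[OF prim])
  moreover have "2 * momentum V0 = A"
    using momentum_eqI[OF lim] by simp
  ultimately show ?thesis by simp
qed

lemma momentum_integral_add:
  assumes V0: "is_primitive V0 g" and w: "is_primitive w h" and ab: "a \<le> b"
  shows "integral {a..b} (\<lambda>x. cinner (\<i> * (V0 x + w x)) (g x + h x))
    = integral {a..b} (\<lambda>x. cinner (\<i> * V0 x) (g x)) + integral {a..b} (\<lambda>x. cinner (\<i> * w x) (h x))
      + 2 * integral {a..b} (\<lambda>x. cinner (\<i> * w x) (g x))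
      + (cinner (\<i> * V0 b) (w b) - cinner (\<i> * V0 a) (w a))"
proof -
  have int: "(\<lambda>x. cinner (\<i> * u x) (k x)) integrable_on {a..b}"
    if "is_primitive u f" "is_primitive v k" for u f v k
    using absolutely_integrable_cinner_primitives[OF that] by (simp add: absolutely_integrable_on_def)
  have "integral {a..b} (\<lambda>x. cinner (\<i> * (V0 x + w x)) (g x + h x))
      = integral {a..b} (\<lambda>x. cinner (\<i> * V0 x) (g x) + cinner (\<i> * w x) (h x)
          + cinner (\<i> * w x) (g x) + cinner (\<i> * V0 x) (h x))"
    by (rule integral_cong) (simp add: cinner_def algebra_simps)
  also have "\<dots> = integral {a..b} (\<lambda>x. cinner (\<i> * V0 x) (g x)) + integral {a..b} (\<lambda>x. cinner (\<i> * w x) (h x))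
      + integral {a..b} (\<lambda>x. cinner (\<i> * w x) (g x)) + integral {a..b} (\<lambda>x. cinner (\<i> * V0 x) (h x))"
    using int[OF V0 V0] int[OF w w] int[OF w V0] int[OF V0 w]
    by (simp add: integral_add integrable_add)
  finally show ?thesis
    using cinner_integration_by_parts[OF V0 w ab] by simp
qed

lemma tendsto_boundary_cinner:
  fixes u w :: "real \<Rightarrow> complex"
  assumes "(u \<longlongrightarrow> l1) at_top" "(u \<longlongrightarrow> l2) at_bot" "(w \<longlongrightarrow> 0) at_top" "(w \<longlongrightarrow> 0) at_bot"
  shows "((\<lambda>R. cinner (c * u R) (w R) - cinner (c * u (-R)) (w (-R))) \<longlongrightarrow> 0) at_top"
proof -
  have "((\<lambda>R. u (-R)) \<longlongrightarrow> l2) at_top"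
    using assms(2) by (simp add: filterlim_at_bot_mirror)
  moreover have "((\<lambda>R. w (-R)) \<longlongrightarrow> 0) at_top"
    using assms(4) by (simp add: filterlim_at_bot_mirror)
  ultimately have "((\<lambda>R. Re (c * u R * cnj (w R)) - Re (c * u (-R) * cnj (w (-R))))
      \<longlongrightarrow> Re (c * l1 * cnj 0) - Re (c * l2 * cnj 0)) at_top"
    using assms(1,3) by (intro tendsto_intros)
  then show ?thesis by (simp add: cinner_def)
qed

lemma tendsto_momentum_integral_add:
  assumes V0: "V0 \<in> Z1" and w: "w \<in> H1"
  shows "((\<lambda>R. LBINT x:{-R..R}. cinner (\<i> * (V0 x + w x)) (weak_deriv (\<lambda>x. V0 x + w x) x))
    \<longlongrightarrow> 2 * momentum V0 + (LINT x|lborel. cinner (\<i> * w x) (weak_deriv w x))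
      + 2 * (LINT x|lborel. cinner (\<i> * w x) (weak_deriv V0 x))) at_top"
proof -
  define g where "g = weak_deriv V0"
  define h where "h = weak_deriv w"
  have pV0: "is_primitive V0 g" and pw: "is_primitive w h"
    unfolding g_def h_def by (rule Z1_is_primitive[OF V0], rule H1_is_primitive[OF w])
  obtain l1 l2 where l: "(V0 \<longlongrightarrow> l1) at_top" "(V0 \<longlongrightarrow> l2) at_bot" and gL2: "g \<in> L2"
    using V0 by (auto simp: Z1_def X1_def g_def)
  have wL2: "w \<in> L2" and hL2: "h \<in> L2"
    using w by (auto simp: H1_def h_def)
  have [measurable]: "g \<in> borel_measurable lborel" "h \<in> borel_measurable lborel"
    using gL2 hL2 by (auto simp: L2_def)
  obtain g' h' where "has_weak_deriv V0 g'" "has_weak_deriv w h'"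
    using V0 w by (auto simp: Z1_def X1_def H1_def)
  then have deriv: "has_weak_deriv (\<lambda>x. V0 x + w x) (\<lambda>x. g x + h x)"
    unfolding g_def h_def by (intro has_weak_deriv_add has_weak_deriv_weak_deriv)
  define B where "B R = cinner (\<i> * V0 R) (w R) - cinner (\<i> * V0 (-R)) (w (-R))" for R
  define P where "P R = integral {-R..R} (\<lambda>x. cinner (\<i> * V0 x) (g x))
    + integral {-R..R} (\<lambda>x. cinner (\<i> * w x) (h x)) + 2 * integral {-R..R} (\<lambda>x. cinner (\<i> * w x) (g x))
    + B R" for R
  have "P R = (LBINT x:{-R..R}. cinner (\<i> * (V0 x + w x)) (weak_deriv (\<lambda>x. V0 x + w x) x))"
    if "0 \<le> R" for R
    using that has_weak_deriv_unique[OF has_weak_deriv_weak_deriv[OF deriv] deriv]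
      has_weak_deriv_measurable[OF has_weak_deriv_weak_deriv[OF deriv]]
    by (simp add: P_def B_def momentum_integral_add[OF pV0 pw]
        set_integral_momentum_density[OF is_primitive_add[OF pV0 pw]])
  then have eventually: "eventually (\<lambda>R. P R
      = (LBINT x:{-R..R}. cinner (\<i> * (V0 x + w x)) (weak_deriv (\<lambda>x. V0 x + w x) x))) at_top"
    by (rule eventually_at_top_linorderI)
  have "(LBINT x:{-R..R}. cinner (\<i> * V0 x) (g x)) = integral {-R..R} (\<lambda>x. cinner (\<i> * V0 x) (g x))"
    for R by (rule set_integral_momentum_density[OF pV0]) simp_all
  then have "((\<lambda>R. integral {-R..R} (\<lambda>x. cinner (\<i> * V0 x) (g x))) \<longlongrightarrow> 2 * momentum V0) at_top"
    using tendsto_momentum_integral[OF V0] by (simp add: g_def)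
  moreover have "(B \<longlongrightarrow> 0) at_top"
    unfolding B_def using pw wL2 hL2
    by (intro tendsto_boundary_cinner[OF l] L2_primitive_tendsto_zero_at_top L2_primitive_tendsto_zero_at_bot)
  ultimately have "(P \<longlongrightarrow> 2 * momentum V0 + (LINT x|lborel. cinner (\<i> * w x) (h x))
      + 2 * (LINT x|lborel. cinner (\<i> * w x) (g x)) + 0) at_top"
    unfolding P_def[abs_def]
    by (intro tendsto_intros tendsto_integral_symmetric_interval integrable_cinner_L2 wL2 hL2 gL2)
  then show ?thesis
    unfolding g_def h_def using eventually by (auto intro: Lim_transform_eventually)
qed

theorem lemma2:
  fixes V0 w :: "real \<Rightarrow> complex"
  assumes "V0 \<in> Z1" and "w \<in> H1"
  shows "(\<lambda>x. V0 x + w x) \<in> Z1 \<and>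
         momentum (\<lambda>x. V0 x + w x) =
           momentum V0
           + 1/2 * (LINT x|lborel. cinner (\<i> * w x) (weak_deriv w x))
           + (LINT x|lborel. cinner (\<i> * w x) (weak_deriv V0 x))"
  using Z1_add_H1[OF assms] momentum_eqI[OF tendsto_momentum_integral_add[OF assms]] by simp

end
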